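(* Fix a prime power $q$ and a real constant $b>0$. Let $m=m(n)$ and $\rho=\rho(n)$ be integer sequences such that $\lim_{n\to\infty} n/m = b$ and $\lim_{n\to\infty}\rho/n = r$. Define $$k(r)=\liminf_{n\to\infty}\frac{\log_{q^m} K_{\mathrm R}(q^m,n,\rho)}{n}.$$ Then for all such $b$ and $r$, $$k(r)=(1-r)(1-br).$$
   Context: For $\mathbf x=(x_0,\dots,x_{n-1})\in\mathrm{GF}(q^m)^n$, the rank $\mathrm{rk}(\mathbf x)$ is the maximum number of coordinates of $\mathbf x$ that are linearly independent over $\mathrm{GF}(q)$; the rank distance is $d_{\mathrm R}(\mathbf x,\mathbf y)=\mathrm{rk}(\mathbf x-\mathbf y)$. The (rank) covering radius of a code $C\subseteq \mathrm{GF}(q^m)^n$ is $\max_{\mathbf x\in\mathrm{GF}(q^m)^n}\min_{\mathbf c\in C} d_{\mathrm R}(\mathbf x,\mathbf c)$. $K_{\mathrm R}(q^m,n,\rho)$ denotes the minimum cardinality of a (linear or nonlinear) code $C\subseteq\mathrm{GF}(q^m)^n$ with rank covering radius $\rho$. *)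

theory Defs
  imports "HOL-Analysis.Analysis" "HOL-Library.Liminf_Limsup"
begin

text \<open>GF(q) is a finite field type 'a.  An element of GF(q^m) is represented by its
coordinate vector in GF(q)^m with respect to a fixed GF(q)-basis (functions
nat => 'a vanishing outside {..<m}); a word in GF(q^m)^n is x :: nat => nat => 'a,
where x j is the j-th coordinate (j < n).  All notions below only use the
GF(q)-vector-space structure of GF(q^m).\<close>

definition words :: "nat \<Rightarrow> nat \<Rightarrow> (nat \<Rightarrow> nat \<Rightarrow> 'a::field) set" where
  "words m n = {x. \<forall>j i. (n \<le> j \<or> m \<le> i) \<longrightarrow> x j i = 0}"

definition coords_indep :: "nat \<Rightarrow> (nat \<Rightarrow> nat \<Rightarrow> 'a::field) \<Rightarrow> nat set \<Rightarrow> bool" where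
  "coords_indep m x S \<longleftrightarrow>
     (\<forall>c :: nat \<Rightarrow> 'a. (\<forall>i<m. (\<Sum>j\<in>S. c j * x j i) = 0) \<longrightarrow> (\<forall>j\<in>S. c j = 0))"

definition rk :: "nat \<Rightarrow> nat \<Rightarrow> (nat \<Rightarrow> nat \<Rightarrow> 'a::field) \<Rightarrow> nat" where
  "rk m n x = Max {card S | S. S \<subseteq> {..<n} \<and> coords_indep m x S}"

definition rank_dist :: "nat \<Rightarrow> nat \<Rightarrow> (nat \<Rightarrow> nat \<Rightarrow> 'a::field) \<Rightarrow> (nat \<Rightarrow> nat \<Rightarrow> 'a) \<Rightarrow> nat" where
  "rank_dist m n x y = rk m n (\<lambda>j i. x j i - y j i)"

definition rank_covers :: "nat \<Rightarrow> nat \<Rightarrow> (nat \<Rightarrow> nat \<Rightarrow> 'a::field) set \<Rightarrow> nat \<Rightarrow> bool" where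
  "rank_covers m n C \<rho> \<longleftrightarrow> (\<forall>x\<in>words m n. \<exists>c\<in>C. rank_dist m n x c \<le> \<rho>)"

definition K_R :: "'a::{field,finite} itself \<Rightarrow> nat \<Rightarrow> nat \<Rightarrow> nat \<Rightarrow> nat" where
  "K_R _ m n \<rho> = (LEAST k. \<exists>C :: (nat \<Rightarrow> nat \<Rightarrow> 'a) set.
       C \<subseteq> words m n \<and> card C = k \<and> rank_covers m n C \<rho>)"

end

(*
  A word of rank s is determined by a maximal independent set S of s coordinates, the
  values of these coordinates (s m entries of GF(q)) and the coefficients expressing the
  other n - s coordinates through them ((n - s) s entries); when the coordinates in S are
  independent these data are unique, and there are at least q^((m-1) s) independent
  s-tuples. Hence the rank ball B_r satisfies
    q^((m-1) r + (n-r) r) <= |B_r| <= 2^n q^(r m + (n-r) r).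
  The sphere-covering bound K_R |B_r| >= q^(mn) and a union bound over all N-tuples of
  codewords (a fixed word is missed by a random N-tuple with probability
  (1 - |B_r| / q^(mn))^N <= exp (- N |B_r| / q^(mn))) then give
    q^((n-r)(m-r) - n) <= K_R(q^m, n, r) <= q^((n-r)(m-r) + r + m + n + 1),
  so log_(q^m) K_R / n = (1 - rho/n)(1 - rho/m) + O(1/m + 1/n), where
  rho/m = (rho/n)(n/m) tends to r b.
*)

theory Submission
  imports Defs
begin

section \<open>Functions with prescribed support\<close>

lemma card_field_ge_2: "2 \<le> CARD('a::{field,finite})"
proof -
  have "card {0::'a, 1} \<le> CARD('a)" by (rule card_mono) auto
  then show ?thesis by simp
qed

definition zero_outside :: "'b set \<Rightarrow> ('b \<Rightarrow> 'c::zero) set" where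
  "zero_outside A = {f. \<forall>x. x \<notin> A \<longrightarrow> f x = 0}"

lemma bij_betw_restrict_zero_outside:
  "bij_betw (\<lambda>f. restrict f A) (zero_outside A) (A \<rightarrow>\<^sub>E UNIV)"
  by (rule bij_betw_byWitness[where f' = "\<lambda>g x. if x \<in> A then g x else 0"])
    (auto simp: zero_outside_def fun_eq_iff PiE_def extensional_def)

lemma finite_zero_outside:
  assumes "finite A"
  shows "finite (zero_outside A :: ('b \<Rightarrow> 'c::{zero,finite}) set)"
proof -
  have "finite (A \<rightarrow>\<^sub>E (UNIV :: 'c set))" using assms by (simp add: finite_PiE)
  then show ?thesis using bij_betw_finite[OF bij_betw_restrict_zero_outside] by blast
qed

lemma card_zero_outside:
  assumes "finite A"
  shows "card (zero_outside A :: ('b \<Rightarrow> 'c::{zero,finite}) set) = CARD('c) ^ card A"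
proof -
  have "card (A \<rightarrow>\<^sub>E (UNIV :: 'c set)) = CARD('c) ^ card A" using assms by (rule card_funcsetE)
  then show ?thesis using bij_betw_same_card[OF bij_betw_restrict_zero_outside] by metis
qed

definition matrices_on :: "('b \<times> 'c) set \<Rightarrow> ('b \<Rightarrow> 'c \<Rightarrow> 'a::zero) set" where
  "matrices_on A = {h. \<forall>j i. (j, i) \<notin> A \<longrightarrow> h j i = 0}"

lemma matrices_on_eq_curry_image: "matrices_on A = curry ` zero_outside A"
proof
  show "matrices_on A \<subseteq> curry ` zero_outside A"
  proof
    fix h assume "h \<in> matrices_on A"
    then have "case_prod h \<in> zero_outside A" by (auto simp: matrices_on_def zero_outside_def)
    then show "h \<in> curry ` zero_outside A" by (rule rev_image_eqI) simp
  qed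
qed (auto simp: matrices_on_def zero_outside_def)

lemma finite_matrices_on:
  "finite A \<Longrightarrow> finite (matrices_on A :: ('b \<Rightarrow> 'c \<Rightarrow> 'a::{zero,finite}) set)"
  by (simp add: matrices_on_eq_curry_image finite_zero_outside)

lemma card_matrices_on:
  assumes "finite A"
  shows "card (matrices_on A :: ('b \<Rightarrow> 'c \<Rightarrow> 'a::{zero,finite}) set) = CARD('a) ^ card A"
proof -
  have "inj_on curry (zero_outside A :: ('b \<times> 'c \<Rightarrow> 'a) set)"
    by (rule inj_onI) (metis case_prod_curry)
  then show ?thesis by (simp add: matrices_on_eq_curry_image card_image card_zero_outside assms)
qed

lemma words_eq_matrices_on: "words m n = matrices_on ({..<n} \<times> {..<m})"
  by (auto simp: words_def matrices_on_def not_le)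

lemma finite_words: "finite (words m n :: (nat \<Rightarrow> nat \<Rightarrow> 'a::{field,finite}) set)"
  by (simp add: words_eq_matrices_on finite_matrices_on)

lemma card_words: "card (words m n :: (nat \<Rightarrow> nat \<Rightarrow> 'a::{field,finite}) set) = CARD('a) ^ (m * n)"
  by (simp add: words_eq_matrices_on card_matrices_on card_cartesian_product mult.commute)

section \<open>Rank of a word\<close>

lemma coords_indep_cong:
  "(\<And>j i. j \<in> S \<Longrightarrow> i < m \<Longrightarrow> x j i = y j i) \<Longrightarrow> coords_indep m x S \<longleftrightarrow> coords_indep m y S"
  unfolding coords_indep_def by (simp cong: sum.cong)

lemma coords_indepD:
  assumes "coords_indep m x S" "\<And>i. i < m \<Longrightarrow> (\<Sum>j\<in>S. c j * x j i) = 0" "j \<in> S"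
  shows "c j = 0"
  using assms unfolding coords_indep_def by blast

lemma finite_indep_cards: "finite {card S | S. S \<subseteq> {..<n} \<and> coords_indep m x S}"
proof (rule finite_subset[of _ "{..n}"])
  show "{card S | S. S \<subseteq> {..<n} \<and> coords_indep m x S} \<subseteq> {..n}"
    using card_mono[OF finite_lessThan, of _ n] by fastforce
qed simp

lemma coords_indep_empty: "coords_indep m x {}"
  by (simp add: coords_indep_def)

lemma card_le_rk: "S \<subseteq> {..<n} \<Longrightarrow> coords_indep m x S \<Longrightarrow> card S \<le> rk m n x"
  unfolding rk_def by (rule Max_ge[OF finite_indep_cards]) blast

lemma rk_leI:
  assumes "\<And>S. S \<subseteq> {..<n} \<Longrightarrow> coords_indep m x S \<Longrightarrow> card S \<le> r"
  shows "rk m n x \<le> r"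
  unfolding rk_def using finite_indep_cards[of n m x] coords_indep_empty[of m x] assms
  by (subst Max_le_iff) auto

lemma rk_attained:
  obtains S where "S \<subseteq> {..<n}" "coords_indep m x S" "card S = rk m n x"
proof -
  have "{card S | S. S \<subseteq> {..<n} \<and> coords_indep m x S} \<noteq> {}"
    using coords_indep_empty[of m x] by blast
  then have "rk m n x \<in> {card S | S. S \<subseteq> {..<n} \<and> coords_indep m x S}"
    unfolding rk_def by (rule Max_in[OF finite_indep_cards])
  then show ?thesis using that by force
qed

lemma coords_indep_insert:
  fixes x :: "nat \<Rightarrow> nat \<Rightarrow> 'a::field"
  assumes "finite S" "coords_indep m x S" "j \<notin> S"
    and not_comb: "\<nexists>a. \<forall>i<m. x j i = (\<Sum>k\<in>S. a k * x k i)"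
  shows "coords_indep m x (insert j S)"
  unfolding coords_indep_def
proof (intro allI impI)
  fix c :: "nat \<Rightarrow> 'a"
  assume c: "\<forall>i<m. (\<Sum>k\<in>insert j S. c k * x k i) = 0"
  have sum_S: "(\<Sum>k\<in>S. c k * x k i) = - (c j * x j i)" if "i < m" for i
  proof -
    have "c j * x j i + (\<Sum>k\<in>S. c k * x k i) = 0"
      using c that assms(1,3) by simp
    then show ?thesis by (metis add.commute add_eq_0_iff)
  qed
  have "c j = 0"
  proof (rule ccontr)
    assume "c j \<noteq> 0"
    have "x j i = (\<Sum>k\<in>S. - c k / c j * x k i)" if "i < m" for i
    proof -
      have "(\<Sum>k\<in>S. - c k / c j * x k i) = - (\<Sum>k\<in>S. c k * x k i) / c j"
        by (simp add: sum_divide_distrib[symmetric] sum_negf)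
      also have "\<dots> = x j i" using sum_S[OF that] \<open>c j \<noteq> 0\<close> by simp
      finally show ?thesis by simp
    qed
    then have "\<exists>a. \<forall>i<m. x j i = (\<Sum>k\<in>S. a k * x k i)"
      by (intro exI[of _ "\<lambda>k. - c k / c j"]) simp
    with not_comb show False by contradiction
  qed
  then have "\<forall>k\<in>S. c k = 0" using sum_S by (auto intro: coords_indepD[OF assms(2)])
  with \<open>c j = 0\<close> show "\<forall>k\<in>insert j S. c k = 0" by simp
qed

definition coord_span :: "nat \<Rightarrow> (nat \<Rightarrow> nat \<Rightarrow> 'a::field) \<Rightarrow> nat set \<Rightarrow> (nat \<Rightarrow> 'a) set" where
  "coord_span m x S = {v \<in> zero_outside {..<m}. \<exists>a. \<forall>i<m. v i = (\<Sum>k\<in>S. a k * x k i)}"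

lemma card_coord_span_le:
  assumes "finite S"
  shows "card (coord_span m x S :: (nat \<Rightarrow> 'a::{field,finite}) set) \<le> CARD('a) ^ card S"
proof -
  let ?comb = "\<lambda>a i. if i < m then \<Sum>k\<in>S. a k * x k i else 0"
  have "coord_span m x S \<subseteq> ?comb ` zero_outside S"
  proof
    fix v assume "v \<in> coord_span m x S"
    then obtain a where v: "v \<in> zero_outside {..<m}" "\<forall>i<m. v i = (\<Sum>k\<in>S. a k * x k i)"
      by (auto simp: coord_span_def)
    show "v \<in> ?comb ` zero_outside S"
    proof (rule image_eqI)
      show "v = ?comb (\<lambda>k. if k \<in> S then a k else 0)"
        using v by (auto simp: zero_outside_def fun_eq_iff intro: sum.cong)
    qed (simp add: zero_outside_def)
  qed
  then have "card (coord_span m x S) \<le> card (?comb ` zero_outside S)"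
    using finite_zero_outside[OF assms] by (intro card_mono) auto
  also have "\<dots> \<le> card (zero_outside S :: (nat \<Rightarrow> 'a) set)"
    by (rule card_image_le) (rule finite_zero_outside[OF assms])
  finally show ?thesis by (simp add: card_zero_outside[OF assms])
qed

lemma sum_sum_swap_mult:
  "(\<Sum>j\<in>S. d j * (\<Sum>k\<in>T. F j k * G k)) = (\<Sum>k\<in>T. (\<Sum>j\<in>S. d j * F j k) * G k)"
  for d :: "'b \<Rightarrow> 'a::comm_semiring_0"
proof -
  have "(\<Sum>j\<in>S. d j * (\<Sum>k\<in>T. F j k * G k)) = (\<Sum>j\<in>S. \<Sum>k\<in>T. d j * F j k * G k)"
    by (simp add: sum_distrib_left mult.assoc)
  also have "\<dots> = (\<Sum>k\<in>T. \<Sum>j\<in>S. d j * F j k * G k)" by (rule sum.swap)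
  finally show ?thesis by (simp add: sum_distrib_right)
qed

(* Pigeonhole: c \<mapsto> (\<Sum>j\<in>S. c j * F j k)\<^sub>k is injective on coefficient vectors
   supported on an independent S, so q^card S <= q^card T. *)
lemma rk_le_card_if_combinations:
  fixes x G :: "nat \<Rightarrow> nat \<Rightarrow> 'a::{field,finite}"
  assumes "finite T" and comb: "\<And>j i. j < n \<Longrightarrow> i < m \<Longrightarrow> x j i = (\<Sum>k\<in>T. F j k * G k i)"
  shows "rk m n x \<le> card T"
proof (rule rk_leI)
  fix S assume S: "S \<subseteq> {..<n}" "coords_indep m x S"
  have "finite S" using S(1) finite_subset by blast
  define coeffs where "coeffs c = (\<lambda>k. if k \<in> T then \<Sum>j\<in>S. c j * F j k else 0)" for c :: "nat \<Rightarrow> 'a"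
  have "inj_on coeffs (zero_outside S)"
  proof (rule inj_onI)
    fix c c' assume c: "c \<in> zero_outside S" "c' \<in> zero_outside S" and eq: "coeffs c = coeffs c'"
    have "(\<Sum>j\<in>S. (c j - c' j) * x j i) = 0" if "i < m" for i
    proof -
      have "(\<Sum>j\<in>S. (c j - c' j) * x j i) = (\<Sum>j\<in>S. (c j - c' j) * (\<Sum>k\<in>T. F j k * G k i))"
        using S(1) that comb by (intro sum.cong) auto
      also have "\<dots> = (\<Sum>k\<in>T. (coeffs c k - coeffs c' k) * G k i)"
        unfolding sum_sum_swap_mult by (simp add: coeffs_def left_diff_distrib sum_subtractf)
      finally show ?thesis using eq by simp
    qed
    then have "c j - c' j = 0" if "j \<in> S" for j
      by (rule coords_indepD[OF S(2) _ that])
    then show "c = c'"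
      using c by (fastforce simp: zero_outside_def fun_eq_iff)
  qed
  moreover have "coeffs ` zero_outside S \<subseteq> zero_outside T"
    by (auto simp: coeffs_def zero_outside_def)
  ultimately have "card (zero_outside S :: (nat \<Rightarrow> 'a) set) \<le> card (zero_outside T :: (nat \<Rightarrow> 'a) set)"
    by (rule card_inj_on_le[OF _ _ finite_zero_outside[OF assms(1)]])
  then have "CARD('a) ^ card S \<le> CARD('a) ^ card T"
    by (simp add: card_zero_outside \<open>finite S\<close> assms(1))
  moreover have "1 < CARD('a)" using card_field_ge_2[where 'a='a] by linarith
  ultimately show "card S \<le> card T" by (metis power_le_imp_le_exp)
qed

section \<open>Size of rank balls\<close>

definition rank_ball :: "nat \<Rightarrow> nat \<Rightarrow> nat \<Rightarrow> (nat \<Rightarrow> nat \<Rightarrow> 'a::field) set" where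
  "rank_ball m n r = {x \<in> words m n. rk m n x \<le> r}"

lemma finite_rank_ball: "finite (rank_ball m n r :: (nat \<Rightarrow> nat \<Rightarrow> 'a::{field,finite}) set)"
  unfolding rank_ball_def by (rule finite_subset[OF _ finite_words]) auto

definition spanned_word ::
  "nat \<Rightarrow> nat \<Rightarrow> nat set \<Rightarrow> (nat \<Rightarrow> nat \<Rightarrow> 'a::field) \<Rightarrow> (nat \<Rightarrow> nat \<Rightarrow> 'a) \<Rightarrow> nat \<Rightarrow> nat \<Rightarrow> 'a"
  where
  "spanned_word m n S g f =
     (\<lambda>j i. if j \<in> S then g j i else if j < n \<and> i < m then \<Sum>k\<in>S. f j k * g k i else 0)"

lemma spanned_word_in_words:
  assumes "S \<subseteq> {..<n}" "g \<in> matrices_on (S \<times> {..<m})"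
  shows "spanned_word m n S g f \<in> words m n"
  using assms by (auto simp: spanned_word_def words_def matrices_on_def)

lemma rk_spanned_word_le:
  fixes g f :: "nat \<Rightarrow> nat \<Rightarrow> 'a::{field,finite}"
  assumes "finite S"
  shows "rk m n (spanned_word m n S g f) \<le> card S"
proof (rule rk_le_card_if_combinations[OF assms,
      where F = "\<lambda>j k. if j \<in> S then (if k = j then 1 else 0) else f j k" and G = g])
  fix j i assume "j < n" "i < m"
  then show "spanned_word m n S g f j i =
      (\<Sum>k\<in>S. (if j \<in> S then (if k = j then 1 else 0) else f j k) * g k i)"
    using assms by (simp add: spanned_word_def if_distrib[of "\<lambda>c. c * _"] sum.delta cong: if_cong)
qed

lemma coord_basis_exists:
  fixes x :: "nat \<Rightarrow> nat \<Rightarrow> 'a::field"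
  obtains S a where "S \<subseteq> {..<n}" "coords_indep m x S" "card S = rk m n x"
    "\<And>j i. j \<in> {..<n} - S \<Longrightarrow> i < m \<Longrightarrow> x j i = (\<Sum>k\<in>S. a j k * x k i)"
proof -
  obtain S where S: "S \<subseteq> {..<n}" "coords_indep m x S" "card S = rk m n x" by (rule rk_attained)
  have "finite S" using S(1) finite_subset by blast
  have "\<forall>j\<in>{..<n} - S. \<exists>a. \<forall>i<m. x j i = (\<Sum>k\<in>S. a k * x k i)"
  proof (rule ballI, rule ccontr)
    fix j assume j: "j \<in> {..<n} - S" and "\<nexists>a. \<forall>i<m. x j i = (\<Sum>k\<in>S. a k * x k i)"
    then have "coords_indep m x (insert j S)"
      using coords_indep_insert[OF \<open>finite S\<close> S(2)] by blast
    then have "card (insert j S) \<le> rk m n x" using S(1) j by (intro card_le_rk) auto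
    then show False using S(3) \<open>finite S\<close> j by simp
  qed
  from bchoice[OF this] obtain a
    where "\<forall>j\<in>{..<n} - S. \<forall>i<m. x j i = (\<Sum>k\<in>S. a j k * x k i)" ..
  with S that show ?thesis by blast
qed

definition spanned_words :: "nat \<Rightarrow> nat \<Rightarrow> nat set \<Rightarrow> (nat \<Rightarrow> nat \<Rightarrow> 'a::field) set" where
  "spanned_words m n S = case_prod (spanned_word m n S) `
     (matrices_on (S \<times> {..<m}) \<times> matrices_on (({..<n} - S) \<times> S))"

lemma finite_spanned_words:
  "finite S \<Longrightarrow> finite (spanned_words m n S :: (nat \<Rightarrow> nat \<Rightarrow> 'a::{field,finite}) set)"
  by (simp add: spanned_words_def finite_matrices_on)

lemma card_spanned_words_le:
  assumes "S \<subseteq> {..<n}"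
  shows "card (spanned_words m n S :: (nat \<Rightarrow> nat \<Rightarrow> 'a::{field,finite}) set)
    \<le> CARD('a) ^ (card S * m + (n - card S) * card S)"
proof -
  have "finite S" using assms finite_subset by blast
  then have "card (spanned_words m n S :: (nat \<Rightarrow> nat \<Rightarrow> 'a) set)
      \<le> card ((matrices_on (S \<times> {..<m}) :: (nat \<Rightarrow> nat \<Rightarrow> 'a) set) \<times>
          (matrices_on (({..<n} - S) \<times> S) :: (nat \<Rightarrow> nat \<Rightarrow> 'a) set))"
    unfolding spanned_words_def by (intro card_image_le) (simp add: finite_matrices_on)
  also have "\<dots> = CARD('a) ^ (card S * m + (n - card S) * card S)"
    using assms \<open>finite S\<close>
    by (simp add: card_cartesian_product card_matrices_on card_Diff_subset power_add)
  finally show ?thesis .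
qed

lemma rank_ball_subset_spanned_words:
  "rank_ball m n r \<subseteq> (\<Union>S\<in>{S. S \<subseteq> {..<n} \<and> card S \<le> r}. spanned_words m n S)"
proof
  fix x :: "nat \<Rightarrow> nat \<Rightarrow> 'a" assume "x \<in> rank_ball m n r"
  then have x: "x \<in> words m n" "rk m n x \<le> r" by (auto simp: rank_ball_def)
  obtain S a where S: "S \<subseteq> {..<n}" "card S = rk m n x"
    and a: "\<And>j i. j \<in> {..<n} - S \<Longrightarrow> i < m \<Longrightarrow> x j i = (\<Sum>k\<in>S. a j k * x k i)"
    by (rule coord_basis_exists[where n = n and m = m and x = x]) blast
  define g where "g = (\<lambda>j i. if j \<in> S then x j i else 0)"
  define f where "f = (\<lambda>j k. if j < n \<and> j \<notin> S \<and> k \<in> S then a j k else 0)"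
  have "spanned_word m n S g f = x"
  proof (intro ext)
    fix j i
    show "spanned_word m n S g f j i = x j i"
    proof (cases "j \<notin> S \<and> j < n \<and> i < m")
      case True
      then have "spanned_word m n S g f j i = (\<Sum>k\<in>S. a j k * x k i)"
        by (auto simp: spanned_word_def f_def g_def intro: sum.cong)
      with True a show ?thesis by force
    next
      case False
      with x(1) show ?thesis by (auto simp: spanned_word_def g_def words_def)
    qed
  qed
  moreover have "(g, f) \<in> matrices_on (S \<times> {..<m}) \<times> matrices_on (({..<n} - S) \<times> S)"
    using x(1) by (auto simp: g_def f_def matrices_on_def words_def)
  ultimately have "x \<in> spanned_words m n S"
    unfolding spanned_words_def by (metis case_prod_conv image_eqI)
  with S x(2) show "x \<in> (\<Union>S\<in>{S. S \<subseteq> {..<n} \<and> card S \<le> r}. spanned_words m n S)"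
    by auto
qed

lemma parameter_count_mono:
  fixes s r n m :: nat
  assumes "s \<le> r" "r \<le> n" "r \<le> m"
  shows "s * m + (n - s) * s \<le> r * m + (n - r) * r"
proof -
  obtain d e where r: "r = s + d" and n: "n = r + e" using assms(1,2) le_Suc_ex by blast
  have "d * s \<le> d * m" using assms by simp
  then have "d * s \<le> d * e + d * m" by linarith
  then show ?thesis unfolding n r by (simp add: algebra_simps)
qed

lemma card_rank_ball_le:
  assumes "r \<le> n" "r \<le> m"
  shows "card (rank_ball m n r :: (nat \<Rightarrow> nat \<Rightarrow> 'a::{field,finite}) set)
    \<le> 2 ^ n * CARD('a) ^ (r * m + (n - r) * r)"
proof -
  let ?q = "CARD('a)" and ?e = "r * m + (n - r) * r"
  let ?I = "{S. S \<subseteq> {..<n} \<and> card S \<le> r}"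
  have finite_I: "finite ?I" by (rule finite_subset[of _ "Pow {..<n}"]) auto
  have card_S: "card (spanned_words m n S :: (nat \<Rightarrow> nat \<Rightarrow> 'a) set) \<le> ?q ^ ?e" if "S \<in> ?I" for S
  proof -
    have "card (spanned_words m n S :: (nat \<Rightarrow> nat \<Rightarrow> 'a) set)
        \<le> ?q ^ (card S * m + (n - card S) * card S)"
      using that by (intro card_spanned_words_le) simp
    also have "\<dots> \<le> ?q ^ ?e"
      using that assms by (intro power_increasing parameter_count_mono) auto
    finally show ?thesis .
  qed
  have "card (rank_ball m n r :: (nat \<Rightarrow> nat \<Rightarrow> 'a) set)
      \<le> card (\<Union>S\<in>?I. spanned_words m n S :: (nat \<Rightarrow> nat \<Rightarrow> 'a) set)"
    using finite_I finite_subset[of _ "{..<n}"]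
    by (intro card_mono rank_ball_subset_spanned_words) (auto intro!: finite_spanned_words)
  also have "\<dots> \<le> (\<Sum>S\<in>?I. card (spanned_words m n S :: (nat \<Rightarrow> nat \<Rightarrow> 'a) set))"
    by (rule card_UN_le[OF finite_I])
  also have "\<dots> \<le> (\<Sum>S\<in>?I. ?q ^ ?e)" by (rule sum_mono) (rule card_S)
  also have "\<dots> = card ?I * ?q ^ ?e" by simp
  also have "\<dots> \<le> 2 ^ n * ?q ^ ?e"
    using card_mono[of "Pow {..<n}" ?I] by (simp add: card_Pow subset_eq)
  finally show ?thesis .
qed

lemma inj_on_spanned_word:
  "inj_on (case_prod (spanned_word m n S))
     ({g \<in> matrices_on (S \<times> {..<m}). coords_indep m g S} \<times> matrices_on (({..<n} - S) \<times> S))"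
proof (rule inj_onI, clarify)
  fix g f g' f' :: "nat \<Rightarrow> nat \<Rightarrow> 'a"
  assume g: "g \<in> matrices_on (S \<times> {..<m})" "coords_indep m g S" "f \<in> matrices_on (({..<n} - S) \<times> S)"
    and g': "g' \<in> matrices_on (S \<times> {..<m})" "f' \<in> matrices_on (({..<n} - S) \<times> S)"
    and eq: "spanned_word m n S g f = spanned_word m n S g' f'"
  have "g j i = g' j i" for j i
    using fun_cong[OF fun_cong[OF eq, of j], of i] g(1) g'(1)
    by (cases "j \<in> S") (auto simp: spanned_word_def matrices_on_def)
  then have same_g: "g' = g" by (simp add: fun_eq_iff)
  have "f j k = f' j k" for j k
  proof (cases "j \<in> {..<n} - S \<and> k \<in> S")
    case True
    have "(\<Sum>l\<in>S. (f j l - f' j l) * g l i) = 0" if "i < m" for i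
      using fun_cong[OF fun_cong[OF eq, of j], of i] True that
      by (simp add: spanned_word_def same_g left_diff_distrib sum_subtractf)
    then have "f j k - f' j k = 0"
      using True coords_indepD[OF g(2), of "\<lambda>l. f j l - f' j l" k] by simp
    then show ?thesis by simp
  next
    case False
    with g(3) g'(2) show ?thesis by (auto simp: matrices_on_def)
  qed
  with same_g show "g = g' \<and> f = f'" by (simp add: fun_eq_iff)
qed

definition indep_tuples :: "nat \<Rightarrow> nat \<Rightarrow> (nat \<Rightarrow> nat \<Rightarrow> 'a::field) set" where
  "indep_tuples m k = {g \<in> words m k. coords_indep m g {..<k}}"

lemma finite_indep_tuples: "finite (indep_tuples m k :: (nat \<Rightarrow> nat \<Rightarrow> 'a::{field,finite}) set)"
  unfolding indep_tuples_def by (rule finite_subset[OF _ finite_words]) auto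

lemma fun_upd_in_indep_tuples:
  assumes g: "g \<in> indep_tuples m k" and v: "v \<in> zero_outside {..<m} - coord_span m g {..<k}"
  shows "g(k := v) \<in> indep_tuples m (Suc k)"
proof -
  have "g(k := v) \<in> words m (Suc k)"
    using g v by (auto simp: indep_tuples_def words_def zero_outside_def)
  moreover have "coords_indep m (g(k := v)) (insert k {..<k})"
  proof (rule coords_indep_insert)
    show "coords_indep m (g(k := v)) {..<k}"
      using g coords_indep_cong[where x = "g(k := v)" and y = g and S = "{..<k}"]
      by (simp add: indep_tuples_def)
    have "(\<Sum>l<k. a l * (g(k := v)) l i) = (\<Sum>l<k. a l * g l i)" for a i
      by (rule sum.cong) auto
    then show "\<nexists>a. \<forall>i<m. (g(k := v)) k i = (\<Sum>l<k. a l * (g(k := v)) l i)"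
      using v by (auto simp: coord_span_def)
  qed simp_all
  ultimately show ?thesis by (simp add: indep_tuples_def lessThan_Suc)
qed

lemma card_outside_coord_span_ge:
  fixes g :: "nat \<Rightarrow> nat \<Rightarrow> 'a::{field,finite}"
  assumes "finite S" "card S < m"
  shows "CARD('a) ^ (m - 1) \<le> card (zero_outside {..<m} - coord_span m g S)"
proof -
  let ?q = "CARD('a)"
  have "coord_span m g S \<subseteq> (zero_outside {..<m} :: (nat \<Rightarrow> 'a) set)"
    by (auto simp: coord_span_def)
  then have "finite (coord_span m g S)" by (rule finite_subset) (simp add: finite_zero_outside)
  then have "card (zero_outside {..<m} :: (nat \<Rightarrow> 'a) set) - card (coord_span m g S)
      \<le> card (zero_outside {..<m} - coord_span m g S)"
    by (rule diff_card_le_card_Diff)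
  moreover have "card (zero_outside {..<m} :: (nat \<Rightarrow> 'a) set) = ?q ^ m"
    by (simp add: card_zero_outside)
  moreover have "card (coord_span m g S) \<le> ?q ^ card S"
    by (rule card_coord_span_le[OF assms(1)])
  moreover have "?q ^ card S \<le> ?q ^ (m - 1)" using assms(2) by (intro power_increasing) auto
  moreover have "2 * ?q ^ (m - 1) \<le> ?q ^ m"
    using assms(2) card_field_ge_2[where 'a='a]
    by (metis Suc_pred' gr_zeroI less_nat_zero_code mult_le_mono1 power_Suc)
  ultimately show ?thesis by linarith
qed

lemma card_indep_tuples_Suc:
  assumes "k < m"
  shows "card (indep_tuples m k :: (nat \<Rightarrow> nat \<Rightarrow> 'a::{field,finite}) set) * CARD('a) ^ (m - 1)
    \<le> card (indep_tuples m (Suc k) :: (nat \<Rightarrow> nat \<Rightarrow> 'a) set)"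
proof -
  let ?q = "CARD('a)" and ?I = "indep_tuples m k :: (nat \<Rightarrow> nat \<Rightarrow> 'a) set"
  let ?ext = "\<lambda>g. zero_outside {..<m} - coord_span m g {..<k}"
  let ?upd = "\<lambda>(g, v). g(k := v)"
  have ext: "?q ^ (m - 1) \<le> card (?ext g)" for g :: "nat \<Rightarrow> nat \<Rightarrow> 'a"
    using assms by (intro card_outside_coord_span_ge) simp_all
  have finite_ext: "finite (?ext g)" for g :: "nat \<Rightarrow> nat \<Rightarrow> 'a" by (simp add: finite_zero_outside)
  have "inj_on ?upd (Sigma ?I ?ext)"
  proof (rule inj_onI, clarify)
    fix g v g' v' assume "g \<in> ?I" "g' \<in> ?I" and eq: "g(k := v) = g'(k := v')"
    then have "g k = (\<lambda>_. 0)" "g' k = (\<lambda>_. 0)" by (auto simp: indep_tuples_def words_def fun_eq_iff)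
    with eq show "g = g' \<and> v = v'" by (metis fun_upd_idem fun_upd_same fun_upd_upd)
  qed
  then have "card (?upd ` Sigma ?I ?ext) = card (Sigma ?I ?ext)" by (rule card_image)
  also have "\<dots> = (\<Sum>g\<in>?I. card (?ext g))"
    using finite_ext by (intro card_SigmaI[OF finite_indep_tuples]) blast
  also have "\<dots> \<ge> card ?I * ?q ^ (m - 1)"
    using sum_mono[of ?I "\<lambda>_. ?q ^ (m - 1)"] ext by simp
  finally have "card ?I * ?q ^ (m - 1) \<le> card (?upd ` Sigma ?I ?ext)" .
  also have "\<dots> \<le> card (indep_tuples m (Suc k) :: (nat \<Rightarrow> nat \<Rightarrow> 'a) set)"
    by (rule card_mono[OF finite_indep_tuples]) (auto intro: fun_upd_in_indep_tuples)
  finally show ?thesis .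
qed

lemma card_indep_tuples_ge:
  "k \<le> m \<Longrightarrow> CARD('a) ^ ((m - 1) * k) \<le> card (indep_tuples m k :: (nat \<Rightarrow> nat \<Rightarrow> 'a::{field,finite}) set)"
proof (induction k)
  case 0
  have "indep_tuples m 0 = {\<lambda>_ _. 0 :: 'a}"
    by (auto simp: indep_tuples_def words_def coords_indep_def fun_eq_iff)
  then show ?case by simp
next
  case (Suc k)
  have "CARD('a) ^ ((m - 1) * Suc k) = CARD('a) ^ ((m - 1) * k) * CARD('a) ^ (m - 1)"
    by (metis mult_Suc_right power_add mult.commute)
  also have "\<dots> \<le> card (indep_tuples m k :: (nat \<Rightarrow> nat \<Rightarrow> 'a) set) * CARD('a) ^ (m - 1)"
    using Suc by (intro mult_right_mono) auto
  also have "\<dots> \<le> card (indep_tuples m (Suc k) :: (nat \<Rightarrow> nat \<Rightarrow> 'a) set)"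
    using Suc.prems by (intro card_indep_tuples_Suc) simp
  finally show ?case .
qed

lemma card_rank_ball_ge:
  assumes "r \<le> n" "r \<le> m"
  shows "CARD('a::{field,finite}) ^ ((m - 1) * r + (n - r) * r)
    \<le> card (rank_ball m n r :: (nat \<Rightarrow> nat \<Rightarrow> 'a) set)"
proof -
  let ?q = "CARD('a)"
  let ?F = "matrices_on (({..<n} - {..<r}) \<times> {..<r}) :: (nat \<Rightarrow> nat \<Rightarrow> 'a) set"
  let ?D = "(indep_tuples m r :: (nat \<Rightarrow> nat \<Rightarrow> 'a) set) \<times> ?F"
  have indep_tuples_eq: "indep_tuples m r = {g \<in> matrices_on ({..<r} \<times> {..<m}). coords_indep m g {..<r}}"
    by (simp add: indep_tuples_def words_eq_matrices_on)
  have "?q ^ ((m - 1) * r + (n - r) * r) = ?q ^ ((m - 1) * r) * card ?F"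
    using assms by (simp add: power_add card_matrices_on card_cartesian_product card_Diff_subset)
  also have "\<dots> \<le> card (indep_tuples m r :: (nat \<Rightarrow> nat \<Rightarrow> 'a) set) * card ?F"
    using card_indep_tuples_ge[OF assms(2), where 'a='a] by (rule mult_right_mono) simp
  also have "\<dots> = card ?D" by (simp add: card_cartesian_product)
  also have "\<dots> = card (case_prod (spanned_word m n {..<r}) ` ?D)"
    unfolding indep_tuples_eq by (rule card_image[symmetric, OF inj_on_spanned_word])
  also have "\<dots> \<le> card (rank_ball m n r :: (nat \<Rightarrow> nat \<Rightarrow> 'a) set)"
  proof (rule card_mono[OF finite_rank_ball], clarify)
    fix g f :: "nat \<Rightarrow> nat \<Rightarrow> 'a" assume "g \<in> indep_tuples m r" "f \<in> ?F"
    then show "spanned_word m n {..<r} g f \<in> rank_ball m n r"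
      using assms rk_spanned_word_le[of "{..<r}" m n g f]
      by (auto simp: rank_ball_def indep_tuples_eq intro: spanned_word_in_words)
  qed
  finally show ?thesis .
qed

section \<open>Covering bounds\<close>

lemma coords_indep_uminus: "coords_indep m (\<lambda>j i. - x j i) S \<longleftrightarrow> coords_indep m x S"
  by (simp add: coords_indep_def sum_negf)

lemma rank_dist_commute: "rank_dist m n x y = rank_dist m n y x"
proof -
  have "(\<lambda>j i. x j i - y j i) = (\<lambda>j i. - (y j i - x j i))" by simp
  then show ?thesis by (simp only: rank_dist_def rk_def coords_indep_uminus)
qed

lemma rank_dist_self: "rank_dist m n x x = (0 :: nat)"
  for x :: "nat \<Rightarrow> nat \<Rightarrow> 'a::{field,finite}"
  using rk_le_card_if_combinations[where x = "\<lambda>j i. 0 :: 'a" and T = "{}"]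
  by (simp add: rank_dist_def)

lemma card_rank_ball_around:
  fixes c :: "nat \<Rightarrow> nat \<Rightarrow> 'a::field"
  assumes "c \<in> words m n"
  shows "card {x \<in> words m n. rank_dist m n x c \<le> r} = card (rank_ball m n r :: (nat \<Rightarrow> nat \<Rightarrow> 'a) set)"
proof (rule bij_betw_same_card[of "\<lambda>x j i. x j i - c j i"])
  show "bij_betw (\<lambda>x j i. x j i - c j i) {x \<in> words m n. rank_dist m n x c \<le> r} (rank_ball m n r)"
    by (rule bij_betw_byWitness[where f' = "\<lambda>y j i. y j i + c j i"])
      (use assms in \<open>auto simp: rank_ball_def words_def rank_dist_def\<close>)
qed

lemma K_R_le_card:
  fixes C :: "(nat \<Rightarrow> nat \<Rightarrow> 'a::{field,finite}) set"
  assumes "C \<subseteq> words m n" "rank_covers m n C \<rho>"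
  shows "K_R TYPE('a) m n \<rho> \<le> card C"
  unfolding K_R_def by (rule Least_le) (use assms in blast)

lemma rank_covers_words:
  "rank_covers m n (words m n :: (nat \<Rightarrow> nat \<Rightarrow> 'a::{field,finite}) set) \<rho>"
  unfolding rank_covers_def
proof
  fix x :: "nat \<Rightarrow> nat \<Rightarrow> 'a" assume "x \<in> words m n"
  then show "\<exists>c\<in>words m n. rank_dist m n x c \<le> \<rho>" by (intro bexI[of _ x]) (simp_all add: rank_dist_self)
qed

lemma K_R_attained:
  obtains C :: "(nat \<Rightarrow> nat \<Rightarrow> 'a::{field,finite}) set"
  where "C \<subseteq> words m n" "card C = K_R TYPE('a) m n \<rho>" "rank_covers m n C \<rho>"
proof -
  let ?P = "\<lambda>k. \<exists>C :: (nat \<Rightarrow> nat \<Rightarrow> 'a) set. C \<subseteq> words m n \<and> card C = k \<and> rank_covers m n C \<rho>"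
  have "?P (card (words m n :: (nat \<Rightarrow> nat \<Rightarrow> 'a) set))" using rank_covers_words by blast
  then have "?P (Least ?P)" by (rule LeastI)
  then show ?thesis using that unfolding K_R_def by blast
qed

lemma sphere_covering_bound:
  "card (words m n :: (nat \<Rightarrow> nat \<Rightarrow> 'a::{field,finite}) set)
    \<le> K_R TYPE('a) m n r * card (rank_ball m n r :: (nat \<Rightarrow> nat \<Rightarrow> 'a) set)"
proof -
  obtain C :: "(nat \<Rightarrow> nat \<Rightarrow> 'a) set"
    where C: "C \<subseteq> words m n" "card C = K_R TYPE('a) m n r" "rank_covers m n C r"
    by (rule K_R_attained)
  have finite_W: "finite (words m n :: (nat \<Rightarrow> nat \<Rightarrow> 'a) set)" by (rule finite_words)
  with C(1) have "finite C" by (rule finite_subset)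
  have "words m n \<subseteq> (\<Union>c\<in>C. {x \<in> words m n. rank_dist m n x c \<le> r})"
    using C(3) by (auto simp: rank_covers_def)
  then have "card (words m n :: (nat \<Rightarrow> nat \<Rightarrow> 'a) set)
      \<le> card (\<Union>c\<in>C. {x \<in> words m n. rank_dist m n x c \<le> r})"
    using \<open>finite C\<close> finite_W by (intro card_mono) auto
  also have "\<dots> \<le> (\<Sum>c\<in>C. card {x \<in> words m n. rank_dist m n x c \<le> r})"
    by (rule card_UN_le[OF \<open>finite C\<close>])
  also have "\<dots> = (\<Sum>c\<in>C. card (rank_ball m n r :: (nat \<Rightarrow> nat \<Rightarrow> 'a) set))"
    using C(1) by (intro sum.cong refl card_rank_ball_around) blast
  finally show ?thesis using C(2) by simp
qed

(* Union bound: if no N elements of Y cover X, every N-tuple of elements of Y avoids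
   some D x, and for each x at most (card Y - V)^N tuples do. *)
lemma exists_cover_if_card_bound:
  fixes D :: "'p \<Rightarrow> 'c set" and V N :: nat
  assumes "finite X" "finite Y" and D: "\<And>x. x \<in> X \<Longrightarrow> D x \<subseteq> Y \<and> V \<le> card (D x)"
    and bound: "card X * (card Y - V) ^ N < card Y ^ N"
  shows "\<exists>C \<subseteq> Y. card C \<le> N \<and> (\<forall>x\<in>X. C \<inter> D x \<noteq> {})"
proof (rule ccontr)
  assume no_cover: "\<not> ?thesis"
  have "{..<N} \<rightarrow>\<^sub>E Y \<subseteq> (\<Union>x\<in>X. {..<N} \<rightarrow>\<^sub>E (Y - D x))"
  proof
    fix t assume t: "t \<in> {..<N} \<rightarrow>\<^sub>E Y"
    have "t ` {..<N} \<subseteq> Y" "card (t ` {..<N}) \<le> N"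
      using t card_image_le[of "{..<N}" t] by auto
    then obtain x where "x \<in> X" "t ` {..<N} \<inter> D x = {}" using no_cover by blast
    with t show "t \<in> (\<Union>x\<in>X. {..<N} \<rightarrow>\<^sub>E (Y - D x))" by (auto simp: PiE_iff)
  qed
  then have "card ({..<N} \<rightarrow>\<^sub>E Y) \<le> card (\<Union>x\<in>X. {..<N} \<rightarrow>\<^sub>E (Y - D x))"
    using assms(1,2) by (intro card_mono) (auto intro!: finite_PiE)
  also have "\<dots> \<le> (\<Sum>x\<in>X. card ({..<N} \<rightarrow>\<^sub>E (Y - D x)))"
    by (rule card_UN_le[OF assms(1)])
  also have "\<dots> \<le> (\<Sum>x\<in>X. (card Y - V) ^ N)"
  proof (rule sum_mono)
    fix x assume "x \<in> X"
    with D have "D x \<subseteq> Y" "V \<le> card (D x)" by auto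
    with assms(2) have "card (Y - D x) \<le> card Y - V"
      by (simp add: card_Diff_subset finite_subset diff_le_mono2)
    then show "card ({..<N} \<rightarrow>\<^sub>E (Y - D x)) \<le> (card Y - V) ^ N"
      by (simp add: card_funcsetE power_mono)
  qed
  finally show False using bound by (simp add: card_funcsetE)
qed

lemma mult_one_minus_power_less_one:
  fixes p X :: real
  assumes "0 \<le> p" "p \<le> 1" "0 < X" "ln X < N * p"
  shows "X * (1 - p) ^ N < 1"
proof -
  have "(1 - p) ^ N \<le> exp (- p) ^ N"
    using assms(2) exp_ge_add_one_self[of "- p"] by (intro power_mono) auto
  also have "\<dots> = exp (- (N * p))" by (simp add: exp_of_nat_mult[symmetric])
  also have "\<dots> < exp (- ln X)" using assms(4) by simp
  also have "\<dots> = 1 / X" using assms(3) by (simp add: exp_minus inverse_eq_divide)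
  finally show ?thesis using assms(3) by (simp add: field_simps)
qed

lemma exists_cover_if_ln_bound:
  fixes D :: "'p \<Rightarrow> 'c set" and V N :: nat
  assumes "finite X" "finite Y" and D: "\<And>x. x \<in> X \<Longrightarrow> D x \<subseteq> Y \<and> V \<le> card (D x)"
    and bound: "ln (card X) < real N * real V / card Y"
  shows "\<exists>C \<subseteq> Y. card C \<le> N \<and> (\<forall>x\<in>X. C \<inter> D x \<noteq> {})"
proof (cases "X = {}")
  case False
  then obtain x where "x \<in> X" by blast
  with D assms(2) have "V \<le> card Y" by (meson card_mono order_trans)
  have "0 < card X" using False assms(1) by (simp add: card_gt_0_iff)
  then have "0 < card Y" using bound by (cases "card Y = 0") auto
  have "real (card X) * (1 - V / card Y) ^ N < 1"
    using \<open>V \<le> card Y\<close> \<open>0 < card X\<close> \<open>0 < card Y\<close> bound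
    by (intro mult_one_minus_power_less_one) auto
  then have "real (card X) * (real (card Y) - V) ^ N < real (card Y) ^ N"
    using \<open>0 < card Y\<close> by (simp add: diff_divide_distrib[symmetric] power_divide field_simps)
  then have "card X * (card Y - V) ^ N < card Y ^ N"
    using \<open>V \<le> card Y\<close> by (simp flip: of_nat_diff of_nat_power of_nat_mult add: of_nat_less_iff)
  from exists_cover_if_card_bound[OF assms(1,2) D this] show ?thesis .
qed auto

lemma power_le_K_R:
  assumes "r \<le> n" "r \<le> m"
  shows "CARD('a::{field,finite}) ^ ((n - r) * (m - r)) \<le> K_R TYPE('a) m n r * CARD('a) ^ n"
proof -
  let ?q = "CARD('a)" and ?K = "K_R TYPE('a) m n r" and ?e = "r * m + (n - r) * r"
  obtain d e where "n = r + d" "m = r + e" using assms le_Suc_ex by blast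
  then have "m * n = (n - r) * (m - r) + ?e" by (simp add: algebra_simps)
  then have "?q ^ ((n - r) * (m - r)) * ?q ^ ?e = card (words m n :: (nat \<Rightarrow> nat \<Rightarrow> 'a) set)"
    by (simp add: card_words power_add)
  also have "\<dots> \<le> ?K * card (rank_ball m n r :: (nat \<Rightarrow> nat \<Rightarrow> 'a) set)"
    by (rule sphere_covering_bound)
  also have "\<dots> \<le> ?K * (2 ^ n * ?q ^ ?e)"
    using card_rank_ball_le[OF assms, where 'a='a] by (rule mult_left_mono) simp
  also have "\<dots> \<le> ?K * ?q ^ n * ?q ^ ?e"
    using card_field_ge_2[where 'a='a] by (simp add: power_mono)
  finally show ?thesis by simp
qed

lemma K_R_le_if_ln_bound:
  fixes m n r N :: nat
  defines "W \<equiv> words m n :: (nat \<Rightarrow> nat \<Rightarrow> 'a::{field,finite}) set"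
  assumes "ln (card W) < real N * real (card (rank_ball m n r :: (nat \<Rightarrow> nat \<Rightarrow> 'a) set)) / card W"
  shows "K_R TYPE('a) m n r \<le> N"
proof -
  define D where "D x = {c \<in> W. rank_dist m n c x \<le> r}" for x :: "nat \<Rightarrow> nat \<Rightarrow> 'a"
  have D: "D x \<subseteq> W \<and> card (rank_ball m n r :: (nat \<Rightarrow> nat \<Rightarrow> 'a) set) \<le> card (D x)"
    if "x \<in> W" for x
    using card_rank_ball_around[of x m n r] that by (simp add: D_def W_def)
  have "finite W" unfolding W_def by (rule finite_words)
  from this this D assms(2) have "\<exists>C \<subseteq> W. card C \<le> N \<and> (\<forall>x\<in>W. C \<inter> D x \<noteq> {})"
    by (rule exists_cover_if_ln_bound)
  then obtain C where C: "C \<subseteq> W" "card C \<le> N" "\<forall>x\<in>W. C \<inter> D x \<noteq> {}"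
    by blast
  have "rank_covers m n C r"
    unfolding rank_covers_def
  proof
    fix x :: "nat \<Rightarrow> nat \<Rightarrow> 'a" assume "x \<in> words m n"
    with C(3) obtain c where "c \<in> C" "rank_dist m n c x \<le> r" by (auto simp: D_def W_def)
    moreover have "rank_dist m n x c = rank_dist m n c x" by (rule rank_dist_commute)
    ultimately show "\<exists>c\<in>C. rank_dist m n x c \<le> r" by (intro bexI[of _ c]) simp_all
  qed
  with C(1) have "K_R TYPE('a) m n r \<le> card C" unfolding W_def by (rule K_R_le_card)
  with C(2) show ?thesis by linarith
qed

lemma K_R_le_power:
  assumes "r \<le> n" "r \<le> m" "1 \<le> m" "1 \<le> n"
  shows "K_R TYPE('a::{field,finite}) m n r \<le> CARD('a) ^ ((n - r) * (m - r) + r + m + n + 1)"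
proof (rule K_R_le_if_ln_bound)
  \<comment> \<open>This N makes N |B_r| / q^(mn) at least q^(m+n+1), which exceeds mn ln q.\<close>
  let ?q = "CARD('a)" and ?W = "words m n :: (nat \<Rightarrow> nat \<Rightarrow> 'a) set"
  let ?N = "?q ^ ((n - r) * (m - r) + r + m + n + 1)" and ?V = "?q ^ ((m - 1) * r + (n - r) * r)"
  have exponents: "(n - r) * (m - r) + r + m + n + 1 + ((m - 1) * r + (n - r) * r) = m * n + (m + n + 1)"
  proof -
    obtain d e where "n = r + d" "m = r + e" using assms(1,2) le_Suc_ex by blast
    moreover have "(m - 1) * r + r = m * r" using assms(3) by (cases m) auto
    ultimately show ?thesis by (simp add: algebra_simps)
  qed
  have "?N * ?V = ?q ^ (m * n + (m + n + 1))" by (simp only: power_add[symmetric] exponents)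
  also have "\<dots> = card ?W * ?q ^ (m + n + 1)" by (simp only: power_add card_words)
  finally have NV_nat: "real ?N * real ?V = real (card ?W) * real ?q ^ (m + n + 1)"
    by (metis of_nat_mult of_nat_power)
  have "card ?W \<noteq> 0" by (simp add: card_words)
  then have NV: "real ?N * real ?V / real (card ?W) = real ?q ^ (m + n + 1)"
    unfolding NV_nat by simp
  have q: "2 \<le> real ?q" using card_field_ge_2[where 'a='a] by simp
  have pow_ge: "k \<le> ?q ^ k" for k
    using less_exp[of k] power_mono[OF card_field_ge_2[where 'a='a], of k] by linarith
  have "ln (real (card ?W)) = real m * real n * ln ?q"
    using q by (simp add: card_words ln_realpow)
  also have "\<dots> < real m * real n * real ?q"
    using q assms(3,4) by simp
  also have "\<dots> \<le> real (?q ^ m) * real (?q ^ n) * real ?q"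
    by (intro mult_mono of_nat_mono pow_ge) auto
  also have "\<dots> = real ?N * real ?V / real (card ?W)"
    unfolding NV by (simp add: power_add mult_ac)
  also have "\<dots> \<le> real ?N * real (card (rank_ball m n r :: (nat \<Rightarrow> nat \<Rightarrow> 'a) set)) / real (card ?W)"
    using card_rank_ball_ge[OF assms(1,2), where 'a='a]
    by (intro divide_right_mono mult_left_mono) simp_all
  finally show "ln (real (card ?W))
      < real ?N * real (card (rank_ball m n r :: (nat \<Rightarrow> nat \<Rightarrow> 'a) set)) / real (card ?W)" .
qed

section \<open>Asymptotics\<close>

lemma log_K_R_approx:
  assumes "r \<le> n" "r \<le> m" "1 \<le> m" "1 \<le> n"
  shows "\<bar>log (real CARD('a::{field,finite}) ^ m) (K_R TYPE('a) m n r) / n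
           - real ((n - r) * (m - r)) / (real m * real n)\<bar> \<le> 3 / m + 1 / n"
proof -
  let ?q = "CARD('a)" and ?K = "K_R TYPE('a) m n r" and ?a = "(n - r) * (m - r)"
  define L where "L = log (real ?q) ?K"
  have q: "1 < real ?q" using card_field_ge_2[where 'a='a] by simp
  have lower: "?q ^ ?a \<le> ?K * ?q ^ n" by (rule power_le_K_R[OF assms(1,2)])
  then have "?K \<noteq> 0" by (cases "?K = 0") auto
  have "real ?a \<le> log (real ?q) (real (?K * ?q ^ n))"
    using lower q by (intro le_log_of_power) (simp flip: of_nat_power of_nat_mult)
  also have "\<dots> = L + n" using \<open>?K \<noteq> 0\<close> q by (simp add: L_def log_mult)
  finally have "real ?a - n \<le> L" by simp
  have "real ?K \<le> real ?q ^ (?a + r + m + n + 1)"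
    using K_R_le_power[OF assms, where 'a='a] by (metis of_nat_le_iff of_nat_power)
  then have "L \<le> real (?a + r + m + n + 1)"
    unfolding L_def using q \<open>?K \<noteq> 0\<close> by (intro log_of_power_le) auto
  moreover note \<open>real ?a - n \<le> L\<close>
  ultimately have "\<bar>L - real ?a\<bar> \<le> 3 * n + m" using assms(1,4) by linarith
  then have "\<bar>L - real ?a\<bar> / (real m * real n) \<le> (3 * n + m) / (real m * real n)"
    by (intro divide_right_mono) auto
  moreover have "log (real ?q ^ m) ?K / n = L / (real m * real n)"
    using q by (simp add: L_def log_base_pow)
  ultimately show ?thesis using assms(3,4)
    by (simp add: diff_divide_distrib[symmetric] abs_divide add_divide_distrib)
qed

lemma one_over_tendsto_0_if_ratio_converges:
  fixes m :: "nat \<Rightarrow> nat"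
  assumes "(\<lambda>n. real n / real (m n)) \<longlonglongrightarrow> b"
  shows "(\<lambda>n. 1 / real (m n)) \<longlonglongrightarrow> 0"
proof -
  have "(\<lambda>n. real n / real (m n) * (1 / real n)) \<longlonglongrightarrow> b * 0"
    by (intro tendsto_mult assms lim_1_over_n)
  moreover have "eventually (\<lambda>n. real n / real (m n) * (1 / real n) = 1 / real (m n)) sequentially"
    using eventually_gt_at_top[of 0] by eventually_elim simp
  ultimately show ?thesis by (simp add: Lim_transform_eventually)
qed

lemma tendsto_rank_exponent:
  fixes m \<rho> :: "nat \<Rightarrow> nat"
  assumes "\<And>n. 0 < m n" "\<And>n. \<rho> n \<le> n" "\<And>n. \<rho> n \<le> m n"
    and "(\<lambda>n. real n / real (m n)) \<longlonglongrightarrow> b" "(\<lambda>n. real (\<rho> n) / real n) \<longlonglongrightarrow> r"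
  shows "(\<lambda>n. real ((n - \<rho> n) * (m n - \<rho> n)) / (real (m n) * real n)) \<longlonglongrightarrow> (1 - r) * (1 - b * r)"
proof -
  have "(\<lambda>n. (1 - real (\<rho> n) / real n) * (1 - real n / real (m n) * (real (\<rho> n) / real n)))
      \<longlonglongrightarrow> (1 - r) * (1 - b * r)"
    by (intro tendsto_intros assms(4,5))
  moreover have "eventually (\<lambda>n. (1 - real (\<rho> n) / real n) * (1 - real n / real (m n) * (real (\<rho> n) / real n))
      = real ((n - \<rho> n) * (m n - \<rho> n)) / (real (m n) * real n)) sequentially"
    using eventually_gt_at_top[of 0]
  proof eventually_elim
    case (elim n)
    with assms(1-3)[of n] show ?case by (simp add: of_nat_diff field_simps)
  qed
  ultimately show ?thesis by (rule Lim_transform_eventually)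
qed

theorem theorem1:
  fixes m \<rho> :: "nat \<Rightarrow> nat" and b r :: real
  assumes "b > 0"
    and "\<And>n. m n > 0"
    and "\<And>n. \<rho> n \<le> n" and "\<And>n. \<rho> n \<le> m n"
    and "(\<lambda>n. real n / real (m n)) \<longlonglongrightarrow> b"
    and "(\<lambda>n. real (\<rho> n) / real n) \<longlonglongrightarrow> r"
  shows "liminf (\<lambda>n. ereal (log (real CARD('a::{field,finite}) ^ m n)
                                   (real (K_R TYPE('a) (m n) n (\<rho> n))) / real n))
         = ereal ((1 - r) * (1 - b * r))"
proof -
  let ?f = "\<lambda>n. log (real CARD('a) ^ m n) (real (K_R TYPE('a) (m n) n (\<rho> n))) / real n"
  let ?A = "\<lambda>n. real ((n - \<rho> n) * (m n - \<rho> n)) / (real (m n) * real n)"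
  have "(\<lambda>n. 3 * (1 / real (m n)) + 1 / real n) \<longlonglongrightarrow> 3 * 0 + 0"
    by (intro tendsto_intros one_over_tendsto_0_if_ratio_converges[OF assms(5)])
  then have error: "(\<lambda>n. 3 / real (m n) + 1 / real n) \<longlonglongrightarrow> 0" by simp
  have "eventually (\<lambda>n. norm (?f n - ?A n) \<le> 3 / real (m n) + 1 / real n) sequentially"
    using eventually_ge_at_top[of 1]
  proof eventually_elim
    case (elim n)
    have "1 \<le> m n" using assms(2)[of n] by linarith
    from log_K_R_approx[OF assms(3,4) this elim, where 'a='a]
    show ?case by (simp only: real_norm_def)
  qed
  then have "(\<lambda>n. ?f n - ?A n) \<longlonglongrightarrow> 0" using error by (rule Lim_null_comparison)
  from tendsto_add[OF this tendsto_rank_exponent[OF assms(2-6)]]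
  have "?f \<longlonglongrightarrow> (1 - r) * (1 - b * r)" by simp
  then show ?thesis by (intro lim_imp_Liminf tendsto_ereal) simp_all
qed

end
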